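(* Let $G$ be a finite simple graph of order $n$ with minimum degree $\delta$. If $\delta\geq 1$ and $\sigma_2(G)\geq \frac{n}{\delta}+\delta-1$, then $\pi_2(G)\geq n-\delta$. Furthermore, if $\pi_2(G)\geq n-\delta$, then $\sigma^*(G)\geq n$.
   Context: $\sigma_2(G)=\min\{d_G(u)+d_G(v): u\neq v,\ uv\notin E(G)\}$ and $\pi_2(G)=\min\{d_G(u)d_G(v): u\neq v,\ uv\notin E(G)\}$, both defined to be $+\infty$ if $G$ is complete. For an independent set $I$ of $G$, $\delta_G(I)=\min\{d_G(u):u\in I\}$, $w_G(I)=\sum_{u\in I}d_G(u)$; $I$ is large if $|I|\ge\delta_G(I)+1$. $\sigma^*(G)=\min\{w_G(I): I \text{ a large independent set of } G\}$, or $+\infty$ if there is no large independent set. *)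

theory Defs
  imports "HOL-Library.Extended_Real"
begin

definition simple_graph :: "'a set \<Rightarrow> ('a \<Rightarrow> 'a \<Rightarrow> bool) \<Rightarrow> bool" where
  "simple_graph V E \<longleftrightarrow> finite V \<and> (\<forall>u v. E u v \<longrightarrow> u \<in> V \<and> v \<in> V)
     \<and> (\<forall>u v. E u v \<longrightarrow> E v u) \<and> (\<forall>u. \<not> E u u)"

definition degree :: "'a set \<Rightarrow> ('a \<Rightarrow> 'a \<Rightarrow> bool) \<Rightarrow> 'a \<Rightarrow> nat" where
  "degree V E u = card {v \<in> V. E u v}"

definition min_degree :: "'a set \<Rightarrow> ('a \<Rightarrow> 'a \<Rightarrow> bool) \<Rightarrow> nat" where
  "min_degree V E = Min (degree V E ` V)"

text \<open>Infimum in ereal; the infimum of the empty set is \<infinity> (G complete).\<close>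
definition sigma2 :: "'a set \<Rightarrow> ('a \<Rightarrow> 'a \<Rightarrow> bool) \<Rightarrow> ereal" where
  "sigma2 V E = Inf {ereal (real (degree V E u + degree V E v)) | u v.
      u \<in> V \<and> v \<in> V \<and> u \<noteq> v \<and> \<not> E u v}"

definition pi2 :: "'a set \<Rightarrow> ('a \<Rightarrow> 'a \<Rightarrow> bool) \<Rightarrow> ereal" where
  "pi2 V E = Inf {ereal (real (degree V E u * degree V E v)) | u v.
      u \<in> V \<and> v \<in> V \<and> u \<noteq> v \<and> \<not> E u v}"

definition independent_set :: "'a set \<Rightarrow> ('a \<Rightarrow> 'a \<Rightarrow> bool) \<Rightarrow> 'a set \<Rightarrow> bool" where
  "independent_set V E I \<longleftrightarrow> I \<subseteq> V \<and> (\<forall>u\<in>I. \<forall>v\<in>I. \<not> E u v)"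

definition set_min_degree :: "'a set \<Rightarrow> ('a \<Rightarrow> 'a \<Rightarrow> bool) \<Rightarrow> 'a set \<Rightarrow> nat" where
  "set_min_degree V E I = Min (degree V E ` I)"

definition set_weight :: "'a set \<Rightarrow> ('a \<Rightarrow> 'a \<Rightarrow> bool) \<Rightarrow> 'a set \<Rightarrow> nat" where
  "set_weight V E I = (\<Sum>u\<in>I. degree V E u)"

text \<open>Large independent set (necessarily nonempty, so that \<delta>_G(I) is defined).\<close>
definition large_independent_set :: "'a set \<Rightarrow> ('a \<Rightarrow> 'a \<Rightarrow> bool) \<Rightarrow> 'a set \<Rightarrow> bool" where
  "large_independent_set V E I \<longleftrightarrow> independent_set V E I \<and> I \<noteq> {}
     \<and> card I \<ge> set_min_degree V E I + 1"

definition sigma_star :: "'a set \<Rightarrow> ('a \<Rightarrow> 'a \<Rightarrow> bool) \<Rightarrow> ereal" where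
  "sigma_star V E = Inf {ereal (real (set_weight V E I)) | I. large_independent_set V E I}"

end

theory Submission
  imports Defs
begin

text \<open>For non-adjacent \<open>u\<close>, \<open>v\<close> with degrees at least \<open>\<delta>\<close>, expanding
  \<open>(d(u) - \<delta>)(d(v) - \<delta>) \<ge> 0\<close> gives \<open>d(u) d(v) \<ge> \<delta> (d(u) + d(v)) - \<delta>\<^sup>2\<close>,
  which the bound on \<open>\<sigma>\<^sub>2\<close> turns into \<open>d(u) d(v) \<ge> n - \<delta>\<close>.
  For a large independent set \<open>I\<close>, let \<open>u \<in> I\<close> have the minimum degree \<open>k \<ge> \<delta>\<close>
  within \<open>I\<close>. The at least \<open>k\<close> other vertices of \<open>I\<close> are not adjacent to \<open>u\<close>,
  so by the bound on \<open>\<pi>\<^sub>2\<close> each has degree at least \<open>(n - \<delta>)/k\<close>, and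
  \<open>w(I) \<ge> k + (n - \<delta>) \<ge> n\<close>.\<close>

lemma min_degree_le_degree:
  assumes "simple_graph V E" "u \<in> V"
  shows "min_degree V E \<le> degree V E u"
  using assms unfolding min_degree_def simple_graph_def by (intro Min_le) auto

lemma degree_le_card:
  assumes "simple_graph V E"
  shows "degree V E u \<le> card V"
  using assms unfolding degree_def simple_graph_def by (intro card_mono) auto

lemma le_sigma2_iff:
  "c \<le> sigma2 V E \<longleftrightarrow> (\<forall>u\<in>V. \<forall>v\<in>V. u \<noteq> v \<longrightarrow> \<not> E u v \<longrightarrow>
     c \<le> ereal (real (degree V E u + degree V E v)))"
  unfolding sigma2_def le_Inf_iff by blast

lemma le_pi2_iff:
  "c \<le> pi2 V E \<longleftrightarrow> (\<forall>u\<in>V. \<forall>v\<in>V. u \<noteq> v \<longrightarrow> \<not> E u v \<longrightarrow>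
     c \<le> ereal (real (degree V E u * degree V E v)))"
  unfolding pi2_def le_Inf_iff by blast

lemma le_sigma_star_iff:
  "c \<le> sigma_star V E \<longleftrightarrow>
     (\<forall>I. large_independent_set V E I \<longrightarrow> c \<le> ereal (real (set_weight V E I)))"
  unfolding sigma_star_def le_Inf_iff by blast

lemma product_lower_bound_from_sum:
  fixes a b d n :: real
  assumes "0 < d" "d \<le> a" "d \<le> b" "n / d + d - 1 \<le> a + b"
  shows "n - d \<le> a * b"
proof -
  have "0 \<le> (a - d) * (b - d)"
    using assms(2,3) by simp
  moreover have "d * (n / d + d - 1) \<le> d * (a + b)"
    using assms(1,4) by (intro mult_left_mono) auto
  moreover have "d * (n / d) = n"
    using assms(1) by simp
  ultimately show ?thesis
    by (simp add: algebra_simps)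
qed

lemma sum_lower_bound_from_scaled_terms:
  fixes f :: "'a \<Rightarrow> real"
  assumes "finite S" "k \<le> real (card S)" "0 < k" "0 \<le> c"
    and "\<And>v. v \<in> S \<Longrightarrow> c \<le> k * f v"
  shows "c \<le> sum f S"
proof -
  have "k * c \<le> real (card S) * c"
    using assms(2,4) by (rule mult_right_mono)
  also have "\<dots> = (\<Sum>v\<in>S. c)"
    by simp
  also have "\<dots> \<le> (\<Sum>v\<in>S. k * f v)"
    using assms(5) by (rule sum_mono)
  also have "\<dots> = k * sum f S"
    by (simp add: sum_distrib_left)
  finally show ?thesis
    using assms(3) by simp
qed

lemma pi2_lower_bound_from_sigma2:
  assumes "simple_graph V E" "min_degree V E \<ge> 1"
    and "sigma2 V E \<ge> ereal (real (card V) / real (min_degree V E) + real (min_degree V E) - 1)"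
  shows "pi2 V E \<ge> ereal (real (card V) - real (min_degree V E))"
  unfolding le_pi2_iff
proof (intro ballI impI)
  fix u v assume uv: "u \<in> V" "v \<in> V" "u \<noteq> v" "\<not> E u v"
  have "real (card V) / real (min_degree V E) + real (min_degree V E) - 1
      \<le> real (degree V E u) + real (degree V E v)"
    using assms(3) uv unfolding le_sigma2_iff by fastforce
  moreover have "min_degree V E \<le> degree V E u" "min_degree V E \<le> degree V E v"
    using min_degree_le_degree[OF assms(1)] uv by auto
  ultimately have "real (card V) - real (min_degree V E) \<le> real (degree V E u) * real (degree V E v)"
    using assms(2) by (intro product_lower_bound_from_sum) auto
  then show "ereal (real (card V) - real (min_degree V E)) \<le> ereal (real (degree V E u * degree V E v))"
    by simp
qed

lemma sigma_star_lower_bound_from_pi2: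
  assumes "simple_graph V E" "min_degree V E \<ge> 1"
    and "pi2 V E \<ge> ereal (real (card V) - real (min_degree V E))"
  shows "sigma_star V E \<ge> ereal (real (card V))"
  unfolding le_sigma_star_iff
proof (intro allI impI)
  fix I assume "large_independent_set V E I"
  then have IV: "I \<subseteq> V" and indep: "\<forall>u\<in>I. \<forall>v\<in>I. \<not> E u v" and "I \<noteq> {}"
    and large: "card I \<ge> set_min_degree V E I + 1"
    unfolding large_independent_set_def independent_set_def by auto
  have "finite I"
    using IV assms(1) finite_subset unfolding simple_graph_def by blast
  define k where "k = set_min_degree V E I"
  have "k \<in> degree V E ` I"
    unfolding k_def set_min_degree_def using \<open>finite I\<close> \<open>I \<noteq> {}\<close> by (intro Min_in) auto
  then obtain u where u: "u \<in> I" "degree V E u = k"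
    by auto
  have "min_degree V E \<le> k" "k \<le> card V"
    using min_degree_le_degree[OF assms(1)] degree_le_card[OF assms(1)] u IV by auto
  have "real (card V) - real (min_degree V E) \<le> (\<Sum>v\<in>I - {u}. real (degree V E v))"
  proof (rule sum_lower_bound_from_scaled_terms)
    show "real k \<le> real (card (I - {u}))"
      using large u \<open>finite I\<close> k_def by (simp add: card_Diff_singleton)
    show "real (card V) - real (min_degree V E) \<le> real k * real (degree V E v)"
      if "v \<in> I - {u}" for v
      using assms(3) that u IV indep unfolding le_pi2_iff by fastforce
  qed (use \<open>finite I\<close> \<open>min_degree V E \<le> k\<close> \<open>k \<le> card V\<close> assms(2) in auto)
  moreover have "real (set_weight V E I) = real k + (\<Sum>v\<in>I - {u}. real (degree V E v))"
    unfolding set_weight_def using \<open>finite I\<close> u by (simp add: sum.remove)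
  ultimately show "ereal (real (card V)) \<le> ereal (real (set_weight V E I))"
    using \<open>min_degree V E \<le> k\<close> by simp
qed

theorem proposition1p6:
  fixes V :: "'a set" and E :: "'a \<Rightarrow> 'a \<Rightarrow> bool"
  assumes "simple_graph V E" and "V \<noteq> {}"
    and "min_degree V E \<ge> 1"
  shows "(sigma2 V E \<ge> ereal (real (card V) / real (min_degree V E) + real (min_degree V E) - 1)
            \<longrightarrow> pi2 V E \<ge> ereal (real (card V) - real (min_degree V E)))
       \<and> (pi2 V E \<ge> ereal (real (card V) - real (min_degree V E))
            \<longrightarrow> sigma_star V E \<ge> ereal (real (card V)))"
  using pi2_lower_bound_from_sigma2[OF assms(1,3)] sigma_star_lower_bound_from_pi2[OF assms(1,3)]
  by blast

end
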